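(* Let $\Omega$ be a $D$-dimensional vector space over a finite field $\mathbb F$, $q=\sqrt{|\mathbb F|}$, and $\lambda\in\mathbb C\setminus\{0\}$. There is a unique $U_q(\mathfrak{sl}_2)$-module structure on $\mathbb C^{\mathcal L(\Omega)}$ such that for all $x\in\mathcal L(\Omega)$: $Ex=\lambda q^{-D}\sum_{x'\subset\mathrel{\cdot} x}x'$, $Fx=\lambda^{-1}q\sum_{x\subset\mathrel{\cdot} x'}x'$, $K^{\pm1}x=q^{\pm(D-2\dim x)}x$.
   Context: $\mathcal L(\Omega)$ is the set of all subspaces of $\Omega$, and $\mathbb C^{\mathcal L(\Omega)}$ is the complex vector space with basis $\mathcal L(\Omega)$. For subspaces $x,x'$, $x'\subset\mathrel{\cdot} x$ means $x'\subseteq x$ and $\dim x'=\dim x-1$ (covering relation). $U_q(\mathfrak{sl}_2)$ is the algebra over $\mathbb C$ generated by $E,F,K^{\pm1}$ with relations $KK^{-1}=K^{-1}K=1$, $qEK-q^{-1}KE=0$, $qKF-q^{-1}FK=0$, $EF-FE=\frac{K-K^{-1}}{q-q^{-1}}$. *)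

theory Defs
  imports Complex_Main
begin

text \<open>The vector space Omega is an abstract vector space over the field 'a, given by a scalar
multiplication scale satisfying the vector_space locale. L(Omega) is its set of subspaces.\<close>

definition subspaces :: "('a::field \<Rightarrow> 'v::ab_group_add \<Rightarrow> 'v) \<Rightarrow> 'v set set" where
  "subspaces scale = {S. module.subspace scale S}"

definition covered_by :: "('a::field \<Rightarrow> 'v::ab_group_add \<Rightarrow> 'v) \<Rightarrow> 'v set \<Rightarrow> 'v set \<Rightarrow> bool" where
  "covered_by scale x' x \<longleftrightarrow> x' \<subseteq> x \<and> vector_space.dim scale x' + 1 = vector_space.dim scale x"

text \<open>The complex vector space with basis L(Omega): complex-valued functions on sets of vectors
that vanish outside L(Omega) (L(Omega) is finite here, so this is the free vector space).\<close>
definition CL :: "('a::field \<Rightarrow> 'v::ab_group_add \<Rightarrow> 'v) \<Rightarrow> ('v set \<Rightarrow> complex) set" where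
  "CL scale = {f. \<forall>y. y \<notin> subspaces scale \<longrightarrow> f y = 0}"

definition bvec :: "'v set \<Rightarrow> ('v set \<Rightarrow> complex)" where
  "bvec x = (\<lambda>y. if y = x then 1 else 0)"

definition lin_endo :: "('a::field \<Rightarrow> 'v::ab_group_add \<Rightarrow> 'v) \<Rightarrow>
    (('v set \<Rightarrow> complex) \<Rightarrow> ('v set \<Rightarrow> complex)) \<Rightarrow> bool" where
  "lin_endo scale M \<longleftrightarrow> (\<forall>u \<in> CL scale. M u \<in> CL scale) \<and>
     (\<forall>u \<in> CL scale. \<forall>v \<in> CL scale. \<forall>a b. \<forall>y.
        M (\<lambda>z. a * u z + b * v z) y = a * M u y + b * M v y)"

definition Uq_module :: "('a::field \<Rightarrow> 'v::ab_group_add \<Rightarrow> 'v) \<Rightarrow> complex \<Rightarrow>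
    (('v set \<Rightarrow> complex) \<Rightarrow> ('v set \<Rightarrow> complex)) \<Rightarrow>
    (('v set \<Rightarrow> complex) \<Rightarrow> ('v set \<Rightarrow> complex)) \<Rightarrow>
    (('v set \<Rightarrow> complex) \<Rightarrow> ('v set \<Rightarrow> complex)) \<Rightarrow>
    (('v set \<Rightarrow> complex) \<Rightarrow> ('v set \<Rightarrow> complex)) \<Rightarrow> bool" where
  "Uq_module scale q E F K Ki \<longleftrightarrow>
     lin_endo scale E \<and> lin_endo scale F \<and> lin_endo scale K \<and> lin_endo scale Ki \<and>
     (\<forall>v \<in> CL scale. \<forall>y.
        K (Ki v) y = v y \<and> Ki (K v) y = v y \<and>
        q * E (K v) y - inverse q * K (E v) y = 0 \<and>
        q * K (F v) y - inverse q * F (K v) y = 0 \<and>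
        E (F v) y - F (E v) y = (K v y - Ki v y) / (q - inverse q))"

end

theory Submission
  imports Defs "HOL-Library.Cardinality"
begin

text \<open>
  All four operators act by matrices indexed by subspaces, \<open>K\<^sup>\<plusminus>\<^sup>1\<close> diagonal. Since \<open>E\<close>
  lowers and \<open>F\<close> raises the dimension by one, the relations between \<open>K\<close> and \<open>E\<close>, \<open>F\<close>
  are immediate. The \<open>(y, z)\<close> entry of \<open>EF - FE\<close> is \<open>q\<^sup>1\<^sup>-\<^sup>D\<close> times the number of common
  upper covers of \<open>y\<close> and \<open>z\<close> minus the number of their common lower covers. For \<open>y \<noteq> z\<close>
  of the same dimension \<open>k\<close> both numbers are \<open>1\<close> or both \<open>0\<close>, according as
  \<open>dim (y + z) = k + 1\<close>, i.e. \<open>dim (y \<inter> z) = k - 1\<close>. For \<open>y = z\<close> they are the Gaussian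
  integers \<open>[D - k]\<close> and \<open>[k]\<close> in \<open>Q = q\<^sup>2\<close>, obtained by partitioning \<open>x - u\<close> along the
  subspaces \<open>u + \<langle>v\<rangle>\<close> and by double counting; hence the entry is
  \<open>(q\<^sup>D\<^sup>-\<^sup>2\<^sup>k - q\<^sup>2\<^sup>k\<^sup>-\<^sup>D) / (q - q\<^sup>-\<^sup>1)\<close>, as required. Uniqueness holds because a linear map
  is determined by its action on a basis.
\<close>

lemma card_UNIV_field_ge_2: "finite (UNIV :: 'a::field set) \<Longrightarrow> 2 \<le> CARD('a)"
  using card_mono[of UNIV "{0::'a, 1}"] by simp

lemma sum_card_filter_swap:
  assumes "finite A" "finite B"
  shows "(\<Sum>a\<in>A. card {b\<in>B. R a b}) = (\<Sum>b\<in>B. card {a\<in>A. R a b})"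
proof -
  have "(\<Sum>a\<in>A. card {b\<in>B. R a b}) = (\<Sum>a\<in>A. \<Sum>b\<in>B. of_bool (R a b))"
    using assms(2) by (simp add: sum.If_cases Int_def)
  also have "\<dots> = (\<Sum>b\<in>B. \<Sum>a\<in>A. of_bool (R a b))" by (rule sum.swap)
  also have "\<dots> = (\<Sum>b\<in>B. card {a\<in>A. R a b})"
    using assms(1) by (simp add: sum.If_cases Int_def)
  finally show ?thesis .
qed

section \<open>Counting subspaces over a finite field\<close>

locale finite_field_vector_space = finite_dimensional_vector_space scale Basis
  for scale :: "'a::field \<Rightarrow> 'b::ab_group_add \<Rightarrow> 'b" (infixr \<open>*s\<close> 75) and Basis +
  assumes finite_scalars: "finite (UNIV :: 'a set)"
begin

lemma card_span_independent:
  assumes "independent B"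
  shows "card (span B) = CARD('a) ^ card B"
  using finiteI_independent[OF assms] assms
proof (induction B rule: finite_induct)
  case empty
  then show ?case by (simp add: span_empty)
next
  case (insert v B)
  have "independent B" using insert.prems dependent_mono subset_insertI by blast
  have "v \<notin> span B" using insert.prems insert.hyps(2) by (simp add: independent_insert)
  have span_eq: "span (insert v B) = (\<lambda>(c, s). c *s v + s) ` (UNIV \<times> span B)"
  proof safe
    fix x assume "x \<in> span (insert v B)"
    then obtain k where "x - k *s v \<in> span B" using span_breakdown_eq by blast
    then show "x \<in> (\<lambda>(c, s). c *s v + s) ` (UNIV \<times> span B)"
      by (intro image_eqI[of _ _ "(k, x - k *s v)"]) auto
  next
    fix c s assume "s \<in> span B"
    then show "c *s v + s \<in> span (insert v B)"
      by (meson in_mono insertI1 span_add span_base span_mono span_scale subset_insertI)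
  qed
  have "inj_on (\<lambda>(c, s). c *s v + s) (UNIV \<times> span B)"
  proof (rule inj_onI, clarsimp)
    fix c s c' s' assume s: "s \<in> span B" "s' \<in> span B" and eq: "c *s v + s = c' *s v + s'"
    have "(c - c') *s v = s' - s" using eq
      by (simp add: scale_left_diff_distrib algebra_simps)
    moreover have "s' - s \<in> span B" using s by (simp add: span_diff)
    ultimately have "c = c'" using \<open>v \<notin> span B\<close>
      by (metis eq_iff_diff_eq_0 span_scale scale_left_imp_eq scale_one scale_scale right_inverse)
    then show "c = c' \<and> s = s'" using eq by simp
  qed
  then have "card (span (insert v B)) = CARD('a) * card (span B)"
    by (simp add: span_eq card_image card_cartesian_product)
  then show ?case using insert.IH \<open>independent B\<close> insert.hyps by simp
qed

lemma finite_vectors: "finite (UNIV :: 'b set)"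
proof (rule ccontr)
  assume "infinite (UNIV :: 'b set)"
  then have "CARD('a) ^ card Basis = 0"
    using card_span_independent[OF independent_Basis] by (simp add: span_Basis)
  then show False using finite_scalars by simp
qed

lemma finite_vector_set [simp]: "finite (A :: 'b set)"
  using finite_vectors by (rule finite_subset[OF subset_UNIV])

lemma finite_vector_sets [simp]: "finite (\<A> :: 'b set set)"
  using finite_vectors by (auto intro: finite_subset simp: Finite_Set.finite_set)

lemma mem_subspaces_iff: "x \<in> subspaces scale \<longleftrightarrow> subspace x"
  by (simp add: subspaces_def)

lemma covered_by_iff: "covered_by scale x y \<longleftrightarrow> x \<subseteq> y \<and> dim x + 1 = dim y"
  by (simp add: covered_by_def)

lemma finite_subspaces: "finite (subspaces scale)"
  by (rule finite_vector_sets)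

lemma card_subspace:
  assumes "subspace W"
  shows "card W = CARD('a) ^ dim W"
proof -
  obtain B where "B \<subseteq> W" "independent B" "W \<subseteq> span B" "card B = dim W"
    using basis_exists by metis
  then show ?thesis using span_subspace[OF _ _ assms] card_span_independent by metis
qed

lemma dim_insert_notin_subspace:
  assumes "subspace u" "v \<notin> u"
  shows "dim (insert v u) = dim u + 1"
proof -
  have "v \<notin> span u" using assms span_eq_iff[of u] by metis
  then show ?thesis by (simp add: dim_insert)
qed

definition interval_atoms :: "'b set \<Rightarrow> 'b set \<Rightarrow> 'b set set" where
  "interval_atoms u x = {w. subspace w \<and> u \<subseteq> w \<and> w \<subseteq> x \<and> dim w = dim u + 1}"

definition interval_coatoms :: "'b set \<Rightarrow> 'b set \<Rightarrow> 'b set set" where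
  "interval_coatoms u x = {w. subspace w \<and> u \<subseteq> w \<and> w \<subseteq> x \<and> dim w + 1 = dim x}"

lemma interval_atom_eq_span_insert:
  assumes "subspace u" "w \<in> interval_atoms u x" "v \<in> w" "v \<notin> u"
  shows "w = span (insert v u)"
proof -
  have w: "subspace w" "dim w = dim u + 1" using assms(2) by (auto simp: interval_atoms_def)
  have "span (insert v u) \<subseteq> w" using assms by (simp add: interval_atoms_def span_minimal)
  moreover have "dim w \<le> dim (span (insert v u))"
    using assms w by (simp add: dim_insert_notin_subspace)
  ultimately show ?thesis using subspace_dim_equal[OF subspace_span w(1)] dim_span by metis
qed

lemma interval_atoms_disjoint:
  assumes "subspace u" "w \<in> interval_atoms u x" "w' \<in> interval_atoms u x" "w \<noteq> w'"
  shows "(w - u) \<inter> (w' - u) = {}"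
  using assms interval_atom_eq_span_insert[OF assms(1)] by blast

lemma Diff_eq_UN_interval_atoms:
  assumes "subspace u" "subspace x" "u \<subseteq> x"
  shows "x - u = (\<Union>w \<in> interval_atoms u x. w - u)"
proof (intro equalityI subsetI)
  fix v assume v: "v \<in> x - u"
  then have "span (insert v u) \<in> interval_atoms u x"
    using assms
    by (auto simp: interval_atoms_def dim_insert_notin_subspace span_minimal intro: span_base)
  moreover have "v \<in> span (insert v u) - u" using v by (simp add: span_base)
  ultimately show "v \<in> (\<Union>w \<in> interval_atoms u x. w - u)" by blast
qed (auto simp: interval_atoms_def)

lemma card_interval_atoms:
  assumes "subspace u" "subspace x" "u \<subseteq> x"
  shows "card (interval_atoms u x) * (CARD('a) - 1) = CARD('a) ^ (dim x - dim u) - 1"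
proof -
  let ?Q = "CARD('a)" and ?N = "card (interval_atoms u x)"
  have "?Q ^ dim x - ?Q ^ dim u = card (x - u)"
    using assms by (simp add: card_Diff_subset card_subspace)
  also have "\<dots> = (\<Sum>w \<in> interval_atoms u x. card (w - u))"
    unfolding Diff_eq_UN_interval_atoms[OF assms]
    using interval_atoms_disjoint[OF assms(1)] by (intro card_UN_disjoint) auto
  also have "\<dots> = ?N * (?Q ^ (dim u + 1) - ?Q ^ dim u)"
    using assms(1) by (simp add: interval_atoms_def card_Diff_subset card_subspace)
  finally have "?Q ^ dim u * (?N * (?Q - 1)) = ?Q ^ dim u * (?Q ^ (dim x - dim u) - 1)"
    using dim_subset[OF assms(3)]
    by (simp add: algebra_simps diff_mult_distrib2 flip: power_add)
  then show ?thesis using finite_scalars by simp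
qed

lemma card_interval_coatoms:
  assumes "subspace u" "subspace x" "u \<subseteq> x"
  shows "card (interval_coatoms u x) = card (interval_atoms u x)"
  using assms
proof (induction "dim x - dim u" arbitrary: u rule: less_induct)
  case less
  let ?Q = "CARD('a)"
  have dim_le: "dim u \<le> dim x" using dim_subset[OF less.prems(3)] .
  consider "dim x = dim u" | "dim x = dim u + 1" | "dim u + 2 \<le> dim x" using dim_le by linarith
  then show ?case
  proof cases
    case 1
    have "interval_atoms u x = {}"
    proof (rule equals0I)
      fix w assume "w \<in> interval_atoms u x"
      then have "w \<subseteq> x" "dim w = dim u + 1" by (simp_all add: interval_atoms_def)
      then show False using 1 dim_subset[of w x] by simp
    qed
    moreover have "interval_coatoms u x = {}"
    proof (rule equals0I)
      fix w assume "w \<in> interval_coatoms u x"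
      then have "u \<subseteq> w" "dim w + 1 = dim x" by (simp_all add: interval_coatoms_def)
      then show False using 1 dim_subset[of u w] by simp
    qed
    ultimately show ?thesis by simp
  next
    case 2
    have "interval_atoms u x = {x}"
    proof (intro set_eqI iffI)
      fix w assume "w \<in> interval_atoms u x"
      then show "w \<in> {x}"
        using 2 less.prems subspace_dim_equal[of w x] by (simp add: interval_atoms_def)
    qed (use 2 less.prems in \<open>simp add: interval_atoms_def\<close>)
    moreover have "interval_coatoms u x = {u}"
    proof (intro set_eqI iffI)
      fix w assume "w \<in> interval_coatoms u x"
      then show "w \<in> {u}"
        using 2 less.prems subspace_dim_equal[of u w] by (simp add: interval_coatoms_def)
    qed (use 2 less.prems in \<open>simp add: interval_coatoms_def\<close>)
    ultimately show ?thesis by simp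
  next
    case 3
    txt \<open>Double count the pairs of an atom below a coatom: each atom lies below \<open>c\<close> coatoms
      (induction hypothesis) and each coatom above \<open>c\<close> atoms (counting atoms).\<close>
    define c where "c = (?Q ^ (dim x - dim u - 1) - 1) div (?Q - 1)"
    have Q: "2 \<le> ?Q" using card_UNIV_field_ge_2[OF finite_scalars] .
    have count_eq_c: "N = c" if "N * (?Q - 1) = ?Q ^ (dim x - dim u - 1) - 1" for N
      using Q unfolding c_def that[symmetric] by simp
    have "c > 0"
    proof -
      have "?Q \<le> ?Q ^ (dim x - dim u - 1)" using 3 Q power_increasing[of 1 _ ?Q] by simp
      then show ?thesis using Q unfolding c_def by (simp add: div_greater_zero_iff)
    qed
    have coatoms_above_atom: "card {w \<in> interval_coatoms u x. u' \<subseteq> w} = c"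
      if "u' \<in> interval_atoms u x" for u'
    proof -
      have u': "subspace u'" "u' \<subseteq> x" "dim u' = dim u + 1"
        using that by (auto simp: interval_atoms_def)
      have "{w \<in> interval_coatoms u x. u' \<subseteq> w} = interval_coatoms u' x"
        using that by (auto simp: interval_atoms_def interval_coatoms_def)
      moreover have "card (interval_coatoms u' x) = card (interval_atoms u' x)"
        using less.hyps[of u'] u' 3 less.prems by simp
      ultimately show ?thesis
        using card_interval_atoms[OF u'(1) less.prems(2) u'(2)] u'(3) by (intro count_eq_c) simp
    qed
    have atoms_below_coatom: "card {u' \<in> interval_atoms u x. u' \<subseteq> w} = c"
      if "w \<in> interval_coatoms u x" for w
    proof -
      have w: "subspace w" "u \<subseteq> w" "dim w + 1 = dim x"
        using that by (auto simp: interval_coatoms_def)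
      have "{u' \<in> interval_atoms u x. u' \<subseteq> w} = interval_atoms u w"
        using that by (auto simp: interval_atoms_def interval_coatoms_def)
      moreover have "dim w - dim u = dim x - dim u - 1" using w(3) by simp
      ultimately show ?thesis
        using card_interval_atoms[OF less.prems(1) w(1,2)] by (intro count_eq_c) simp
    qed
    have "card (interval_atoms u x) * c = card (interval_coatoms u x) * c"
      using sum_card_filter_swap[of "interval_atoms u x" "interval_coatoms u x" "\<lambda>u' w. u' \<subseteq> w"]
      by (simp add: coatoms_above_atom atoms_below_coatom)
    then show ?thesis using \<open>c > 0\<close> by simp
  qed
qed

definition upper_covers :: "'b set \<Rightarrow> 'b set set" where
  "upper_covers y = {x \<in> subspaces scale. covered_by scale y x}"

definition lower_covers :: "'b set \<Rightarrow> 'b set set" where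
  "lower_covers y = {x \<in> subspaces scale. covered_by scale x y}"

lemma card_upper_covers:
  assumes "subspace y"
  shows "card (upper_covers y) * (CARD('a) - 1) = CARD('a) ^ (dim (UNIV :: 'b set) - dim y) - 1"
proof -
  have "upper_covers y = interval_atoms y UNIV"
    by (auto simp: upper_covers_def interval_atoms_def mem_subspaces_iff covered_by_iff)
  then show ?thesis using card_interval_atoms[OF assms] by simp
qed

lemma card_lower_covers:
  assumes "subspace y"
  shows "card (lower_covers y) * (CARD('a) - 1) = CARD('a) ^ dim y - 1"
proof -
  have y: "{0} \<subseteq> y" using subspace_0[OF assms] by simp
  have "lower_covers y = interval_coatoms {0} y"
    using y by (auto simp: lower_covers_def interval_coatoms_def mem_subspaces_iff covered_by_iff
        subspace_0)
  then show ?thesis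
    using card_interval_coatoms[OF _ assms y] card_interval_atoms[OF _ assms y] by simp
qed

lemma common_upper_covers_eq:
  assumes y: "subspace y" and z: "subspace z" and "y \<noteq> z" "dim y = dim z"
  defines "P \<equiv> {a + b |a b. a \<in> y \<and> b \<in> z}"
  shows "upper_covers y \<inter> upper_covers z = (if dim P = dim y + 1 then {P} else {})"
    (is "?U = _")
proof -
  have P: "subspace P" "y \<subseteq> P" "z \<subseteq> P"
    using subspace_sums[OF y z] subspace_0[OF y] subspace_0[OF z] unfolding P_def by force+
  have "y \<noteq> P" using subspace_dim_equal[OF z y] P(3) assms(3,4) by auto
  then have "dim y < dim P" using subspace_dim_equal[OF y P(1,2)] by linarith
  have unique: "x = P" if "x \<in> ?U" for x
  proof -
    have x: "subspace x" "y \<subseteq> x" "z \<subseteq> x" "dim x = dim y + 1"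
      using that by (auto simp: upper_covers_def mem_subspaces_iff covered_by_iff)
    then have "P \<subseteq> x" using subspace_add unfolding P_def by blast
    then have "dim P = dim x" using dim_subset[OF \<open>P \<subseteq> x\<close>] \<open>dim y < dim P\<close> x by simp
    then show ?thesis using subspace_dim_equal[OF P(1) x(1) \<open>P \<subseteq> x\<close>] by simp
  qed
  have "x \<in> ?U \<longleftrightarrow> x = P \<and> dim P = dim y + 1" for x
    using unique[of x] P assms(4) by (auto simp: upper_covers_def mem_subspaces_iff covered_by_iff)
  then show ?thesis by auto
qed

lemma common_lower_covers_eq:
  assumes y: "subspace y" and z: "subspace z" and "y \<noteq> z" "dim y = dim z"
  shows "lower_covers y \<inter> lower_covers z = (if dim (y \<inter> z) + 1 = dim y then {y \<inter> z} else {})"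
    (is "?W = _")
proof -
  have I: "subspace (y \<inter> z)" using subspace_inter[OF y z] .
  have "y \<inter> z \<noteq> y" using subspace_dim_equal[OF y z] assms(3,4) by auto
  then have "dim (y \<inter> z) < dim y"
    using subspace_dim_equal[OF I y] dim_subset[of "y \<inter> z" y] by auto
  have unique: "w = y \<inter> z" if "w \<in> ?W" for w
  proof -
    have w: "subspace w" "w \<subseteq> y \<inter> z" "dim w + 1 = dim y"
      using that by (auto simp: lower_covers_def mem_subspaces_iff covered_by_iff)
    then have "dim w = dim (y \<inter> z)" using dim_subset[OF w(2)] \<open>dim (y \<inter> z) < dim y\<close> by simp
    then show ?thesis using subspace_dim_equal[OF w(1) I w(2)] by simp
  qed
  have "w \<in> ?W \<longleftrightarrow> w = y \<inter> z \<and> dim (y \<inter> z) + 1 = dim y" for w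
    using unique[of w] I assms(4) by (auto simp: lower_covers_def mem_subspaces_iff covered_by_iff)
  then show ?thesis by auto
qed

lemma card_common_upper_covers_eq_card_common_lower_covers:
  assumes "subspace y" "subspace z" "y \<noteq> z"
  shows "card (upper_covers y \<inter> upper_covers z) = card (lower_covers y \<inter> lower_covers z)"
proof (cases "dim y = dim z")
  case True
  then show ?thesis
    unfolding common_upper_covers_eq[OF assms True] common_lower_covers_eq[OF assms True]
    using dim_sums_Int[OF assms(1,2)] by simp
next
  case False
  then have "upper_covers y \<inter> upper_covers z = {}" "lower_covers y \<inter> lower_covers z = {}"
    by (auto simp: upper_covers_def lower_covers_def covered_by_iff)
  then show ?thesis by simp
qed

end

section \<open>Operators given by matrices on the basis of subspaces\<close>

definition matrix_op :: "'s set \<Rightarrow> ('s \<Rightarrow> 's \<Rightarrow> complex) \<Rightarrow> ('s \<Rightarrow> complex) \<Rightarrow> 's \<Rightarrow> complex" where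
  "matrix_op S m v = (\<lambda>y. \<Sum>x\<in>S. m y x * v x)"

lemma matrix_op_comp:
  "matrix_op S a (matrix_op S b v) = matrix_op S (\<lambda>y z. \<Sum>x\<in>S. a y x * b x z) v"
proof
  fix y
  have "matrix_op S a (matrix_op S b v) y = (\<Sum>x\<in>S. \<Sum>z\<in>S. a y x * b x z * v z)"
    by (simp add: matrix_op_def sum_distrib_left mult.assoc)
  also have "\<dots> = (\<Sum>z\<in>S. \<Sum>x\<in>S. a y x * b x z * v z)" by (rule sum.swap)
  also have "\<dots> = matrix_op S (\<lambda>y z. \<Sum>x\<in>S. a y x * b x z) v y"
    by (simp add: matrix_op_def sum_distrib_right)
  finally show "matrix_op S a (matrix_op S b v) y = matrix_op S (\<lambda>y z. \<Sum>x\<in>S. a y x * b x z) v y" .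
qed

lemma matrix_op_lincomb:
  "matrix_op S (\<lambda>y z. a * m y z + b * m' y z) v y = a * matrix_op S m v y + b * matrix_op S m' v y"
  by (simp add: matrix_op_def sum.distrib sum_distrib_left algebra_simps)

lemma matrix_op_cong:
  "(\<And>z. z \<in> S \<Longrightarrow> m y z = m' y z) \<Longrightarrow> matrix_op S m v y = matrix_op S m' v y"
  by (simp add: matrix_op_def)

lemma matrix_op_delta:
  assumes "finite S" "\<And>y. y \<notin> S \<Longrightarrow> v y = 0"
  shows "matrix_op S (\<lambda>y z. of_bool (y = z)) v y = v y"
  using assms by (cases "y \<in> S") (simp_all add: matrix_op_def if_distrib)

lemma matrix_op_bvec:
  assumes "finite S" "x \<in> S"
  shows "matrix_op S m (bvec x) = (\<lambda>y. m y x)"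
proof
  fix y
  have "(\<Sum>x'\<in>S. m y x' * bvec x x') = (\<Sum>x'\<in>S. if x' = x then m y x else 0)"
    by (rule sum.cong) (simp_all add: bvec_def)
  then show "matrix_op S m (bvec x) y = m y x" using assms by (simp add: matrix_op_def)
qed

lemma sum_bvec: "finite T \<Longrightarrow> (\<Sum>x\<in>T. bvec x y) = of_bool (y \<in> T)"
  by (simp add: bvec_def eq_commute[of y])

lemma lin_endo_matrix_op:
  fixes scale :: "'a::field \<Rightarrow> 'v::ab_group_add \<Rightarrow> 'v"
  assumes "\<And>y x. y \<notin> subspaces scale \<Longrightarrow> x \<in> subspaces scale \<Longrightarrow> m y x = 0"
  shows "lin_endo scale (matrix_op (subspaces scale) m)"
  using assms
  by (simp add: lin_endo_def CL_def matrix_op_def sum.distrib sum_distrib_left algebra_simps)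

lemma matrix_op_comp_relation:
  assumes "\<And>z. z \<in> S \<Longrightarrow> a * (\<Sum>x\<in>S. m1 y x * m2 x z) + b * (\<Sum>x\<in>S. m3 y x * m4 x z) = n y z"
  shows "a * matrix_op S m1 (matrix_op S m2 v) y + b * matrix_op S m3 (matrix_op S m4 v) y
    = matrix_op S n v y"
  unfolding matrix_op_comp matrix_op_lincomb[symmetric] by (rule matrix_op_cong) (rule assms)

lemma Uq_module_matrix_opI:
  fixes scale :: "'a::field \<Rightarrow> 'v::ab_group_add \<Rightarrow> 'v"
    and e f k k' :: "'v set \<Rightarrow> 'v set \<Rightarrow> complex"
  defines "S \<equiv> subspaces scale"
  assumes "finite S"
    and vanish: "\<And>m y x. m \<in> {e, f, k, k'} \<Longrightarrow> y \<notin> S \<Longrightarrow> x \<in> S \<Longrightarrow> m y x = 0"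
    and KK': "\<And>y z. z \<in> S \<Longrightarrow> (\<Sum>x\<in>S. k y x * k' x z) = of_bool (y = z)"
    and K'K: "\<And>y z. z \<in> S \<Longrightarrow> (\<Sum>x\<in>S. k' y x * k x z) = of_bool (y = z)"
    and EK: "\<And>y z. z \<in> S \<Longrightarrow>
      q * (\<Sum>x\<in>S. e y x * k x z) - inverse q * (\<Sum>x\<in>S. k y x * e x z) = 0"
    and KF: "\<And>y z. z \<in> S \<Longrightarrow>
      q * (\<Sum>x\<in>S. k y x * f x z) - inverse q * (\<Sum>x\<in>S. f y x * k x z) = 0"
    and EF: "\<And>y z. z \<in> S \<Longrightarrow>
      (\<Sum>x\<in>S. e y x * f x z) - (\<Sum>x\<in>S. f y x * e x z) = (k y z - k' y z) / (q - inverse q)"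
  shows "Uq_module scale q (matrix_op S e) (matrix_op S f) (matrix_op S k) (matrix_op S k')"
  unfolding Uq_module_def
proof (intro conjI ballI allI)
  have "lin_endo scale (matrix_op S m)" if "m \<in> {e, f, k, k'}" for m
    using vanish[OF that] unfolding S_def by (rule lin_endo_matrix_op)
  then show "lin_endo scale (matrix_op S e)" "lin_endo scale (matrix_op S f)"
    "lin_endo scale (matrix_op S k)" "lin_endo scale (matrix_op S k')" by simp_all
  fix v y assume "v \<in> CL scale"
  then have "matrix_op S (\<lambda>y z. of_bool (y = z)) v y = v y"
    using \<open>finite S\<close> by (intro matrix_op_delta) (simp_all add: CL_def S_def)
  moreover have "1 * matrix_op S k (matrix_op S k' v) y + 0 * matrix_op S k (matrix_op S k' v) y
      = matrix_op S (\<lambda>y z. of_bool (y = z)) v y"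
    "1 * matrix_op S k' (matrix_op S k v) y + 0 * matrix_op S k' (matrix_op S k v) y
      = matrix_op S (\<lambda>y z. of_bool (y = z)) v y"
    by (rule matrix_op_comp_relation; simp add: KK' K'K)+
  ultimately show "matrix_op S k (matrix_op S k' v) y = v y"
    "matrix_op S k' (matrix_op S k v) y = v y" by simp_all
  have "q * matrix_op S e (matrix_op S k v) y + (- inverse q) * matrix_op S k (matrix_op S e v) y
      = matrix_op S (\<lambda>_ _. 0) v y"
    "q * matrix_op S k (matrix_op S f v) y + (- inverse q) * matrix_op S f (matrix_op S k v) y
      = matrix_op S (\<lambda>_ _. 0) v y"
    by (rule matrix_op_comp_relation; use EK KF in simp)+
  then show
    "q * matrix_op S e (matrix_op S k v) y - inverse q * matrix_op S k (matrix_op S e v) y = 0"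
    "q * matrix_op S k (matrix_op S f v) y - inverse q * matrix_op S f (matrix_op S k v) y = 0"
    by (simp_all add: matrix_op_def)
  have "1 * matrix_op S e (matrix_op S f v) y + (- 1) * matrix_op S f (matrix_op S e v) y
      = matrix_op S (\<lambda>y z. (k y z - k' y z) / (q - inverse q)) v y"
    by (rule matrix_op_comp_relation) (simp add: EF)
  then show "matrix_op S e (matrix_op S f v) y - matrix_op S f (matrix_op S e v) y
      = (matrix_op S k v y - matrix_op S k' v y) / (q - inverse q)"
    by (simp add: matrix_op_def sum_divide_distrib sum_subtractf left_diff_distrib
        diff_divide_distrib)
qed

lemma bvec_combination_in_CL:
  "T \<subseteq> subspaces scale \<Longrightarrow> (\<lambda>z. \<Sum>x\<in>T. c x * bvec x z) \<in> CL scale"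
  by (auto simp: CL_def bvec_def intro!: sum.neutral)

lemma lin_endo_lincomb:
  "lin_endo scale M \<Longrightarrow> u \<in> CL scale \<Longrightarrow> w \<in> CL scale \<Longrightarrow>
    M (\<lambda>z. a * u z + b * w z) y = a * M u y + b * M w y"
  unfolding lin_endo_def by blast

lemma lin_endo_bvec_combination:
  assumes M: "lin_endo scale M" and "finite T" "T \<subseteq> subspaces scale"
  shows "M (\<lambda>z. \<Sum>x\<in>T. c x * bvec x z) y = (\<Sum>x\<in>T. c x * M (bvec x) y)"
  using assms(2,3)
proof (induction T rule: finite_induct)
  case empty
  have "(\<lambda>z. 0) \<in> CL scale" by (simp add: CL_def)
  then show ?case using lin_endo_lincomb[OF M, of "\<lambda>z. 0" "\<lambda>z. 0" 0 0] by simp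
next
  case (insert a T)
  have "bvec a \<in> CL scale" using insert.prems by (simp add: CL_def bvec_def)
  moreover have "(\<lambda>z. \<Sum>x\<in>T. c x * bvec x z) \<in> CL scale"
    using insert.prems by (simp add: bvec_combination_in_CL)
  ultimately show ?case
    using lin_endo_lincomb[OF M, of "bvec a" "\<lambda>z. \<Sum>x\<in>T. c x * bvec x z" "c a" 1] insert by simp
qed

lemma lin_endo_eq_on_CL:
  assumes "finite (subspaces scale)" "lin_endo scale M" "lin_endo scale M'"
    and "\<And>x. x \<in> subspaces scale \<Longrightarrow> M (bvec x) = M' (bvec x)" and "v \<in> CL scale"
  shows "M v = M' v"
proof -
  have "v = (\<lambda>z. \<Sum>x\<in>subspaces scale. v x * bvec x z)"
  proof
    fix z
    have "(\<Sum>x\<in>subspaces scale. v x * bvec x z) = (\<Sum>x\<in>subspaces scale. if x = z then v z else 0)"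
      by (rule sum.cong) (auto simp: bvec_def)
    then show "v z = (\<Sum>x\<in>subspaces scale. v x * bvec x z)"
      using assms(1,5) by (simp add: CL_def)
  qed
  then have "M v y = M' v y" for y
    using lin_endo_bvec_combination[OF assms(2,1) order_refl, of v y]
      lin_endo_bvec_combination[OF assms(3,1) order_refl, of v y] assms(4) by simp
  then show ?thesis by blast
qed

lemma Uq_module_eq_on_CL:
  assumes "finite (subspaces scale)"
    and "Uq_module scale q E F K Ki" "Uq_module scale q E' F' K' Ki'"
    and "\<And>x. x \<in> subspaces scale \<Longrightarrow>
      E (bvec x) = E' (bvec x) \<and> F (bvec x) = F' (bvec x) \<and>
      K (bvec x) = K' (bvec x) \<and> Ki (bvec x) = Ki' (bvec x)"
    and "v \<in> CL scale"
  shows "E v = E' v \<and> F v = F' v \<and> K v = K' v \<and> Ki v = Ki' v"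
  using assms(2-4) lin_endo_eq_on_CL[OF assms(1) _ _ _ assms(5)] unfolding Uq_module_def by metis

section \<open>The \<open>U\<^sub>q(sl\<^sub>2)\<close>-action on the subspace lattice\<close>

lemma sum_if_mult_if:
  fixes a b :: "'a::comm_semiring_1"
  assumes "finite S"
  shows "(\<Sum>x\<in>S. (if P x then a else 0) * (if Q x then b else 0))
    = a * b * of_nat (card {x \<in> S. P x \<and> Q x})"
proof -
  have "(\<Sum>x\<in>S. (if P x then a else 0) * (if Q x then b else 0))
      = (\<Sum>x\<in>S. if P x \<and> Q x then a * b else 0)"
    by (rule sum.cong) auto
  also have "\<dots> = a * b * of_nat (card {x \<in> S. P x \<and> Q x})"
    using sum.inter_filter[OF \<open>finite S\<close>, of "\<lambda>_. a * b", symmetric] by (simp add: mult.commute)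
  finally show ?thesis .
qed

lemma sum_mult_diagonal_right:
  fixes m :: "'s \<Rightarrow> 'a::comm_semiring_1"
  shows "finite S \<Longrightarrow> z \<in> S \<Longrightarrow> (\<Sum>x\<in>S. m x * (if x = z then d x else 0)) = m z * d z"
  by (simp add: if_distrib[of "(*) _"] cong: if_cong)

lemma sum_mult_diagonal_left:
  fixes m :: "'s \<Rightarrow> 'a::comm_semiring_1"
  shows "finite S \<Longrightarrow> (\<Sum>x\<in>S. (if y = x then d x else 0) * m x) = (if y \<in> S then d y * m y else 0)"
  by (simp add: if_distrib[of "\<lambda>t. t * _"] cong: if_cong)

text \<open>With \<open>a = q\<^sup>D\<^sup>-\<^sup>k\<close>, \<open>b = q\<^sup>k\<close> and \<open>A\<close>, \<open>B\<close> the numbers of upper and lower covers of a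
  \<open>k\<close>-dimensional subspace, this is the diagonal of \<open>[E, F] = (K - K\<^sup>-\<^sup>1) / (q - q\<^sup>-\<^sup>1)\<close>.\<close>

lemma commutator_diagonal_identity:
  fixes q a b A B :: complex
  assumes "q \<noteq> 0" "q^2 \<noteq> 1" "a \<noteq> 0" "b \<noteq> 0"
    and "A * (q^2 - 1) = a^2 - 1" "B * (q^2 - 1) = b^2 - 1"
  shows "q / (a * b) * (A - B) = (a / b - b / a) / (q - inverse q)"
proof -
  have "q^2 - 1 \<noteq> 0" "q - inverse q = (q^2 - 1) / q"
    using assms(1,2) by (simp_all add: field_simps power2_eq_square)
  have "(A - B) * (q^2 - 1) = a^2 - b^2"
    by (simp add: left_diff_distrib assms(5,6))
  then have "A - B = (a^2 - b^2) / (q^2 - 1)"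
    using \<open>q^2 - 1 \<noteq> 0\<close> by (simp add: eq_divide_eq)
  moreover have "q / (a * b) * ((a^2 - b^2) / (q^2 - 1)) = (a / b - b / a) / ((q^2 - 1) / q)"
    using assms(1,3,4) \<open>q^2 - 1 \<noteq> 0\<close> by (simp add: field_simps power2_eq_square)
  ultimately show ?thesis using \<open>q - inverse q = (q^2 - 1) / q\<close> by simp
qed

definition lowering_matrix ::
    "('a::field \<Rightarrow> 'v::ab_group_add \<Rightarrow> 'v) \<Rightarrow> complex \<Rightarrow> 'v set \<Rightarrow> 'v set \<Rightarrow> complex" where
  "lowering_matrix scale c y x = (if y \<in> subspaces scale \<and> covered_by scale y x then c else 0)"

definition raising_matrix ::
    "('a::field \<Rightarrow> 'v::ab_group_add \<Rightarrow> 'v) \<Rightarrow> complex \<Rightarrow> 'v set \<Rightarrow> 'v set \<Rightarrow> complex" where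
  "raising_matrix scale c y x = (if y \<in> subspaces scale \<and> covered_by scale x y then c else 0)"

definition weight_matrix :: "('a::field \<Rightarrow> 'v::ab_group_add \<Rightarrow> 'v) \<Rightarrow> complex \<Rightarrow> nat \<Rightarrow> int \<Rightarrow>
    'v set \<Rightarrow> 'v set \<Rightarrow> complex" where
  "weight_matrix scale q D s y x =
    (if y = x then q powi (s * (int D - 2 * int (vector_space.dim scale x))) else 0)"

context finite_field_vector_space
begin

lemma lowering_raising_product:
  "(\<Sum>x\<in>subspaces scale. lowering_matrix scale c y x * raising_matrix scale c' x z)
    = (if y \<in> subspaces scale then c * c' * of_nat (card (upper_covers y \<inter> upper_covers z)) else 0)"
  unfolding lowering_matrix_def raising_matrix_def sum_if_mult_if[OF finite_subspaces]
  by (auto simp: upper_covers_def Int_def intro!: arg_cong[where f = card])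

lemma raising_lowering_product:
  "(\<Sum>x\<in>subspaces scale. raising_matrix scale c' y x * lowering_matrix scale c x z)
    = (if y \<in> subspaces scale then c * c' * of_nat (card (lower_covers y \<inter> lower_covers z)) else 0)"
  unfolding lowering_matrix_def raising_matrix_def sum_if_mult_if[OF finite_subspaces]
  by (auto simp: lower_covers_def Int_def intro!: arg_cong[where f = card])

lemma lowering_matrix_on_basis:
  "x \<in> subspaces scale \<Longrightarrow> matrix_op (subspaces scale) (lowering_matrix scale c) (bvec x)
    = (\<lambda>y. c * (\<Sum>x' \<in> {x'. x' \<in> subspaces scale \<and> covered_by scale x' x}. bvec x' y))"
  using finite_subspaces
  by (simp add: matrix_op_bvec sum_bvec lowering_matrix_def fun_eq_iff)

lemma raising_matrix_on_basis:
  "x \<in> subspaces scale \<Longrightarrow> matrix_op (subspaces scale) (raising_matrix scale c) (bvec x)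
    = (\<lambda>y. c * (\<Sum>x' \<in> {x'. x' \<in> subspaces scale \<and> covered_by scale x x'}. bvec x' y))"
  using finite_subspaces
  by (simp add: matrix_op_bvec sum_bvec raising_matrix_def fun_eq_iff)

lemma weight_matrix_on_basis:
  assumes "x \<in> subspaces scale"
  shows "matrix_op (subspaces scale) (weight_matrix scale q D s) (bvec x)
    = (\<lambda>y. q powi (s * (int D - 2 * int (dim x))) * bvec x y)"
  unfolding matrix_op_bvec[OF finite_subspaces assms]
  by (simp add: weight_matrix_def bvec_def fun_eq_iff)

context
  fixes q :: complex
  assumes q_squared: "q^2 = of_nat CARD('a)"
begin

lemma q_nonzero: "q \<noteq> 0"
  using q_squared card_UNIV_field_ge_2[OF finite_scalars] by auto

lemma q_squared_neq_1: "q^2 \<noteq> 1"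
proof
  assume "q^2 = 1"
  then have "CARD('a) = 1" using q_squared by (metis of_nat_1 of_nat_eq_iff)
  then show False using card_UNIV_field_ge_2[OF finite_scalars] by simp
qed

lemma of_nat_q_integer:
  assumes "N * (CARD('a) - 1) = CARD('a) ^ n - 1"
  shows "of_nat N * (q^2 - 1) = (q ^ n)^2 - 1"
proof -
  have "1 \<le> CARD('a)" using card_UNIV_field_ge_2[OF finite_scalars] by simp
  then have "of_nat N * (of_nat CARD('a) - 1) = (of_nat CARD('a) :: complex) ^ n - 1"
    using arg_cong[OF assms, of "of_nat :: nat \<Rightarrow> complex"] by (simp add: of_nat_diff)
  moreover have "(q ^ n)^2 = of_nat CARD('a) ^ n" by (metis power_mult mult.commute q_squared)
  ultimately show ?thesis by (simp add: q_squared)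
qed

lemma weight_matrix_mult_inverse:
  assumes "z \<in> subspaces scale"
  shows "(\<Sum>x\<in>subspaces scale. weight_matrix scale q D s y x * weight_matrix scale q D (- s) x z)
    = of_bool (y = z)"
  unfolding weight_matrix_def
  by (subst sum_mult_diagonal_right[OF finite_subspaces assms])
    (simp add: q_nonzero flip: power_int_add)

lemma weight_shift: "q * q powi (n - 2) = inverse q * q powi n"
  using q_nonzero by (simp add: power_int_diff field_simps power2_eq_square)

lemma weight_matrix_mult_right:
  assumes "z \<in> subspaces scale"
  shows "(\<Sum>x\<in>subspaces scale. m x * weight_matrix scale q D 1 x z)
    = m z * q powi (int D - 2 * int (dim z))"
  unfolding weight_matrix_def by (subst sum_mult_diagonal_right[OF finite_subspaces assms]) simp

lemma weight_matrix_mult_left: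
  "(\<Sum>x\<in>subspaces scale. weight_matrix scale q D 1 y x * m x)
    = (if y \<in> subspaces scale then q powi (int D - 2 * int (dim y)) * m y else 0)"
  unfolding weight_matrix_def by (subst sum_mult_diagonal_left[OF finite_subspaces]) simp

lemma lowering_weight_relation:
  assumes "z \<in> subspaces scale"
  shows "q * (\<Sum>x\<in>subspaces scale. lowering_matrix scale c y x * weight_matrix scale q D 1 x z)
      - inverse q * (\<Sum>x\<in>subspaces scale. weight_matrix scale q D 1 y x * lowering_matrix scale c x z)
    = 0"
proof (cases "y \<in> subspaces scale \<and> covered_by scale y z")
  case True
  then have "int D - 2 * int (dim z) = (int D - 2 * int (dim y)) - 2" by (simp add: covered_by_iff)
  then have "q * q powi (int D - 2 * int (dim z)) = inverse q * q powi (int D - 2 * int (dim y))"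
    by (simp only: weight_shift)
  then show ?thesis
    using True unfolding weight_matrix_mult_right[OF assms] weight_matrix_mult_left
    by (simp add: lowering_matrix_def algebra_simps)
qed (unfold weight_matrix_mult_right[OF assms] weight_matrix_mult_left,
    simp add: lowering_matrix_def)

lemma raising_weight_relation:
  assumes "z \<in> subspaces scale"
  shows "q * (\<Sum>x\<in>subspaces scale. weight_matrix scale q D 1 y x * raising_matrix scale c x z)
      - inverse q * (\<Sum>x\<in>subspaces scale. raising_matrix scale c y x * weight_matrix scale q D 1 x z)
    = 0"
proof (cases "y \<in> subspaces scale \<and> covered_by scale z y")
  case True
  then have "int D - 2 * int (dim y) = (int D - 2 * int (dim z)) - 2" by (simp add: covered_by_iff)
  then have "q * q powi (int D - 2 * int (dim y)) = inverse q * q powi (int D - 2 * int (dim z))"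
    by (simp only: weight_shift)
  then show ?thesis
    using True unfolding weight_matrix_mult_right[OF assms] weight_matrix_mult_left
    by (simp add: raising_matrix_def algebra_simps)
qed (unfold weight_matrix_mult_right[OF assms] weight_matrix_mult_left,
    simp add: raising_matrix_def)

lemma lowering_raising_commutator:
  defines "D \<equiv> dim (UNIV :: 'b set)"
  assumes "z \<in> subspaces scale" "c * c' = q / q ^ D"
  shows "(\<Sum>x\<in>subspaces scale. lowering_matrix scale c y x * raising_matrix scale c' x z)
      - (\<Sum>x\<in>subspaces scale. raising_matrix scale c' y x * lowering_matrix scale c x z)
    = (weight_matrix scale q D 1 y z - weight_matrix scale q D (- 1) y z) / (q - inverse q)"
proof (cases "y = z")
  case False
  then show ?thesis
    using card_common_upper_covers_eq_card_common_lower_covers[of y z] assms(2)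
    by (simp add: lowering_raising_product raising_lowering_product weight_matrix_def
        mem_subspaces_iff)
next
  case True
  have z: "subspace z" using assms(2) by (simp add: mem_subspaces_iff)
  define a where "a = q ^ (D - dim z)"
  define b where "b = q ^ dim z"
  have "dim z \<le> D" unfolding D_def by (rule dim_subset) simp
  then have "q ^ D = a * b" unfolding a_def b_def by (simp flip: power_add)
  have "weight_matrix scale q D 1 z z = q powi (int (D - dim z) - int (dim z))"
    "weight_matrix scale q D (- 1) z z = q powi (int (dim z) - int (D - dim z))"
    using \<open>dim z \<le> D\<close> by (simp_all add: weight_matrix_def of_nat_diff)
  then have "weight_matrix scale q D 1 z z = a / b" "weight_matrix scale q D (- 1) z z = b / a"
    unfolding a_def b_def
    by (simp_all only: power_int_diff[OF disjI1[OF q_nonzero]] power_int_of_nat)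
  moreover have "of_nat (card (upper_covers z)) * (q^2 - 1) = a^2 - 1"
    unfolding a_def D_def by (rule of_nat_q_integer) (rule card_upper_covers[OF z])
  moreover have "of_nat (card (lower_covers z)) * (q^2 - 1) = b^2 - 1"
    unfolding b_def by (rule of_nat_q_integer) (rule card_lower_covers[OF z])
  moreover have "a \<noteq> 0" "b \<noteq> 0" unfolding a_def b_def using q_nonzero by simp_all
  ultimately have "q / (a * b) * (of_nat (card (upper_covers z)) - of_nat (card (lower_covers z)))
      = (weight_matrix scale q D 1 z z - weight_matrix scale q D (- 1) z z) / (q - inverse q)"
    using commutator_diagonal_identity[OF q_nonzero q_squared_neq_1] by simp
  then show ?thesis
    using True assms(2,3) \<open>q ^ D = a * b\<close>
    by (simp add: lowering_raising_product raising_lowering_product right_diff_distrib)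
qed

lemma Uq_module_on_subspaces:
  fixes lam :: complex
  defines "D \<equiv> dim (UNIV :: 'b set)"
  assumes "lam \<noteq> 0"
  shows "Uq_module scale q
    (matrix_op (subspaces scale) (lowering_matrix scale (lam * inverse q ^ D)))
    (matrix_op (subspaces scale) (raising_matrix scale (inverse lam * q)))
    (matrix_op (subspaces scale) (weight_matrix scale q D 1))
    (matrix_op (subspaces scale) (weight_matrix scale q D (- 1)))"
proof -
  have "lam * inverse q ^ D * (inverse lam * q) = q / q ^ D"
    using assms(2) by (simp add: field_simps)
  note commutator = lowering_raising_commutator[OF _ this[unfolded D_def], folded D_def]
  show ?thesis
  proof (rule Uq_module_matrix_opI[OF finite_subspaces])
    show "m y x = 0"
      if "m \<in> {lowering_matrix scale (lam * inverse q ^ D), raising_matrix scale (inverse lam * q),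
        weight_matrix scale q D 1, weight_matrix scale q D (- 1)}"
      and "y \<notin> subspaces scale" "x \<in> subspaces scale" for m y x
      using that by (auto simp: lowering_matrix_def raising_matrix_def weight_matrix_def)
  qed (use weight_matrix_mult_inverse[of _ D 1] weight_matrix_mult_inverse[of _ D "- 1"]
      lowering_weight_relation raising_weight_relation commutator in simp_all)
qed

end

end

theorem mainTheorem14:
  fixes scale :: "'a::{field,finite} \<Rightarrow> 'v::{ab_group_add,finite} \<Rightarrow> 'v"
    and D :: nat and q lam :: complex
  assumes "vector_space scale"
    and "vector_space.dim scale (UNIV :: 'v set) = D"
    and "q = complex_of_real (sqrt (real (card (UNIV :: 'a set))))"
    and "lam \<noteq> 0"
  defines "P \<equiv> \<lambda>E F K Ki. Uq_module scale q E F K Ki \<and>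
      (\<forall>x \<in> subspaces scale.
         E (bvec x) = (\<lambda>y. lam * inverse q ^ D *
            (\<Sum>x' \<in> {x'. x' \<in> subspaces scale \<and> covered_by scale x' x}. bvec x' y)) \<and>
         F (bvec x) = (\<lambda>y. inverse lam * q *
            (\<Sum>x' \<in> {x'. x' \<in> subspaces scale \<and> covered_by scale x x'}. bvec x' y)) \<and>
         K (bvec x) = (\<lambda>y. q powi (int D - 2 * int (vector_space.dim scale x)) * bvec x y) \<and>
         Ki (bvec x) = (\<lambda>y. q powi (- (int D - 2 * int (vector_space.dim scale x))) * bvec x y))"
  shows "(\<exists>E F K Ki. P E F K Ki) \<and>
         (\<forall>E F K Ki E' F' K' Ki'. P E F K Ki \<longrightarrow> P E' F' K' Ki' \<longrightarrow>
            (\<forall>v \<in> CL scale. E v = E' v \<and> F v = F' v \<and> K v = K' v \<and> Ki v = Ki' v))"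
proof
  interpret vector_space scale by fact
  obtain B where "independent B" "span B = UNIV"
    using basis_exists[of UNIV] by (metis span_subspace subspace_UNIV top_greatest)
  then interpret V: finite_field_vector_space scale B
    by unfold_locales simp_all
  let ?S = "subspaces scale"
  have "q^2 = of_nat CARD('a)" using assms(3) by (simp flip: of_real_power)
  then have "P (matrix_op ?S (lowering_matrix scale (lam * inverse q ^ D)))
      (matrix_op ?S (raising_matrix scale (inverse lam * q)))
      (matrix_op ?S (weight_matrix scale q D 1)) (matrix_op ?S (weight_matrix scale q D (- 1)))"
    unfolding P_def using V.Uq_module_on_subspaces[of q lam] assms(2,4)
    by (simp add: V.lowering_matrix_on_basis V.raising_matrix_on_basis V.weight_matrix_on_basis)
  then show "\<exists>E F K Ki. P E F K Ki" by blast
  show "\<forall>E F K Ki E' F' K' Ki'. P E F K Ki \<longrightarrow> P E' F' K' Ki' \<longrightarrow>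
      (\<forall>v \<in> CL scale. E v = E' v \<and> F v = F' v \<and> K v = K' v \<and> Ki v = Ki' v)"
  proof (intro allI impI ballI)
    fix E F K Ki E' F' K' Ki' v
    assume P: "P E F K Ki" "P E' F' K' Ki'" and "v \<in> CL scale"
    show "E v = E' v \<and> F v = F' v \<and> K v = K' v \<and> Ki v = Ki' v"
      by (rule Uq_module_eq_on_CL[OF V.finite_subspaces, of q E F K Ki E' F' K' Ki' v])
        (use P \<open>v \<in> CL scale\<close> in \<open>simp_all add: P_def\<close>)
  qed
qed

end
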